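(* For every positive integer $n$, $$\sum_{j=1}^{n}\csc^6\left(\frac{\pi(2j-1)}{4n}\right) = \frac{8n^2(8n^4+5n^2+2)}{15}.$$ *)

theory Defs
  imports Complex_Main
begin

end

theory Submission
  imports Defs "HOL-Computational_Algebra.Polynomial"
begin

text \<open>Put t_j = (2j - 1) pi / (4n) for j = 1..n, so that cos (2n t_j) = 0. Since
  cos (2n t) = cos t ^ 2n * Re ((1 + i tan t) ^ 2n), the numbers - tan t_j ^ 2 are n distinct
  roots of T(x) = sum_k (2n choose 2k) x^k. As T(0) = 1 and deg T = n, this forces
  T(x) = prod_j (1 + cot t_j ^ 2 x): the elementary symmetric functions of the cot t_j ^ 2 are the
  binomial coefficients (2n choose 2k). Newton's identities turn them into the first three power
  sums, and csc t ^ 6 = (1 + cot t ^ 2) ^ 3.\<close>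

lemma Re_i_power: "Re (\<i> ^ k) = (if even k then (-1) ^ (k div 2) else 0)"
proof (cases "even k")
  case True then obtain m where "k = 2*m" by blast
  then show ?thesis by (simp add: power_mult)
next
  case False then obtain m where "k = 2*m+1" using oddE by blast
  then show ?thesis by (simp add: power_mult)
qed

definition even_binomial_poly :: "nat \<Rightarrow> real poly" where
  "even_binomial_poly n = (\<Sum>k\<le>n. monom (real (2*n choose (2*k))) k)"

lemma coeff_even_binomial_poly: "coeff (even_binomial_poly n) k = real (2*n choose (2*k))"
  by (auto simp: even_binomial_poly_def coeff_sum coeff_monom)

lemma degree_even_binomial_poly: "degree (even_binomial_poly n) \<le> n"
  unfolding even_binomial_poly_def
  by (intro degree_sum_le) (auto intro: order.trans[OF degree_monom_le])

lemma poly_even_binomial_poly: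
  "poly (even_binomial_poly n) x = (\<Sum>k\<le>n. real (2*n choose (2*k)) * x^k)"
  by (simp add: even_binomial_poly_def poly_sum poly_monom)

lemma Re_one_plus_i_power_even:
  "Re ((1 + \<i> * complex_of_real t) ^ (2*n)) = poly (even_binomial_poly n) (- (t^2))"
proof -
  define g where "g k = real (2*n choose k) * t^k * Re (\<i> ^ k)" for k
  have "(1 + \<i> * complex_of_real t) ^ (2*n)
      = (\<Sum>k\<le>2*n. of_nat (2*n choose k) * (\<i> * complex_of_real t)^k * 1^(2*n-k))"
    by (subst add.commute) (rule binomial_ring)
  then have "Re ((1 + \<i> * complex_of_real t) ^ (2*n)) = (\<Sum>k\<le>2*n. g k)"
    by (simp add: g_def Re_sum power_mult_distrib mult_ac)
  also have "\<dots> = (\<Sum>k<2*Suc n. if even k then g k else 0)"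
  proof -
    have "{..<2*Suc n} = insert (2*n+1) {..2*n}" by auto
    moreover have "g (2*n+1) = 0" by (simp add: g_def)
    ultimately have "(\<Sum>k\<le>2*n. g k) = (\<Sum>k<2*Suc n. g k)" by simp
    also have "\<dots> = (\<Sum>k<2*Suc n. if even k then g k else 0)"
      by (intro sum.cong) (auto simp: g_def Re_i_power)
    finally show ?thesis .
  qed
  also have "\<dots> = (\<Sum>k<Suc n. g (2*k))"
    using sum_split_even_odd[of g "\<lambda>_. 0" "Suc n"] by (simp only: add_0_right sum.neutral_const)
  also have "\<dots> = poly (even_binomial_poly n) (- (t^2))"
    unfolding poly_even_binomial_poly lessThan_Suc_atMost
  proof (intro sum.cong refl)
    fix k
    have "Re (\<i> ^ (2*k)) = (-1)^k" by (simp add: power_mult)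
    moreover have "(- (t^2))^k = (-1)^k * t^(2*k)" by (metis power_minus power_mult)
    ultimately show "g (2*k) = real (2*n choose (2*k)) * (- (t^2))^k"
      by (simp only: g_def mult_ac)
  qed
  finally show ?thesis .
qed

lemma cos_mult_even_binomial_poly:
  assumes "cos x \<noteq> 0"
  shows "cos (real (2*n) * x) = cos x ^ (2*n) * poly (even_binomial_poly n) (- (tan x ^ 2))"
proof -
  have "cis x = complex_of_real (cos x) * (1 + \<i> * complex_of_real (tan x))"
    using assms by (simp add: complex_eq_iff tan_def)
  then have "cis x ^ (2*n)
      = complex_of_real (cos x ^ (2*n)) * (1 + \<i> * complex_of_real (tan x)) ^ (2*n)"
    by (simp add: power_mult_distrib)
  then have "Re (cis x ^ (2*n)) = cos x ^ (2*n) * Re ((1 + \<i> * complex_of_real (tan x)) ^ (2*n))"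
    by simp
  then show ?thesis
    by (simp only: DeMoivre cis.sel Re_one_plus_i_power_even)
qed

lemma prod_linear_factors_eqI:
  fixes a :: "'b \<Rightarrow> 'a::field"
  assumes "finite S" "inj_on a S" "\<And>j. j \<in> S \<Longrightarrow> a j \<noteq> 0"
    and "degree p \<le> card S" "poly p 0 = 1"
    and "\<And>j. j \<in> S \<Longrightarrow> poly p (- inverse (a j)) = 0"
  shows "p = (\<Prod>j\<in>S. [:1, a j:])"
proof (rule poly_eqI_degree)
  define A where "A = insert 0 ((\<lambda>j. - inverse (a j)) ` S)"
  have "inj_on (\<lambda>j. - inverse (a j)) S"
    using assms(2) by (auto simp: inj_on_def)
  moreover have "0 \<notin> (\<lambda>j. - inverse (a j)) ` S"
    using assms(3) by auto
  ultimately have "card A = Suc (card S)"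
    using assms(1) by (simp add: A_def card_image)
  moreover have "degree (\<Prod>j\<in>S. [:1, a j:]) \<le> (\<Sum>j\<in>S. degree [:1, a j:])"
    using degree_prod_sum_le[OF assms(1), of "\<lambda>j. [:1, a j:]"] by (simp only: o_def)
  moreover have "(\<Sum>j\<in>S. degree [:1, a j:]) \<le> card S"
    using sum_mono[of S "\<lambda>j. degree [:1, a j:]" "\<lambda>_. 1"] by simp
  ultimately show "card A > degree p" "card A > degree (\<Prod>j\<in>S. [:1, a j:])"
    using assms(4) by auto
  show "poly p x = poly (\<Prod>j\<in>S. [:1, a j:]) x" if x: "x \<in> A" for x
  proof -
    consider "x = 0" | j where "j \<in> S" "x = - inverse (a j)"
      using x unfolding A_def by blast
    then show ?thesis
    proof cases
      case 2
      then have "poly (\<Prod>j\<in>S. [:1, a j:]) x = 0"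
        using assms(1,3) by (auto simp: poly_prod intro!: prod_zero bexI[of _ j])
      then show ?thesis using 2 assms(6) by simp
    qed (simp add: assms(5) poly_prod)
  qed
qed

lemma cot_sq_inj_on: "inj_on (\<lambda>x. cot x ^ 2) {0<..<pi/2}"
proof (rule inj_onI)
  fix x y :: real
  assume x: "x \<in> {0<..<pi/2}" and y: "y \<in> {0<..<pi/2}" and eq: "cot x ^ 2 = cot y ^ 2"
  have "cot x = cot y"
    using eq x y cot_gt_zero by (auto simp: power2_eq_iff_nonneg less_imp_le)
  then have "tan x = tan y" by (simp add: tan_altdef)
  moreover have "tan x < tan y" if "x < y"
    using that x y by (intro tan_monotone) auto
  moreover have "tan y < tan x" if "y < x"
    using that x y by (intro tan_monotone) auto
  ultimately show "x = y"
    by (cases x y rule: linorder_cases) auto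
qed

lemma one_plus_cot_sq: "sin x \<noteq> 0 \<Longrightarrow> 1 + cot x ^ 2 = 1 / sin x ^ 2"
  by (simp add: cot_def field_simps)

definition odd_angle :: "nat \<Rightarrow> nat \<Rightarrow> real" where
  "odd_angle n j = pi * (2 * real j - 1) / (4 * real n)"

lemma odd_angle_bounds:
  assumes "j \<in> {1..n}"
  shows "odd_angle n j \<in> {0<..<pi/2}"
proof -
  have "0 < 2 * real j - 1" "2 * real j - 1 < 2 * real n"
    using assms by auto
  then have "0 < pi * (2 * real j - 1)" "pi * (2 * real j - 1) < pi * (2 * real n)"
    by auto
  then show ?thesis
    using assms by (auto simp: odd_angle_def field_simps)
qed

lemma cos_mult_odd_angle:
  assumes "j \<in> {1..n}"
  shows "cos (real (2*n) * odd_angle n j) = 0"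
proof -
  have "real (2*n) * odd_angle n j = real (j - 1) * pi + pi/2"
    using assms by (auto simp: odd_angle_def of_nat_diff field_simps)
  then show ?thesis by (simp add: cos_add)
qed

lemma inj_on_odd_angle: "inj_on (odd_angle n) {1..n}"
  by (rule inj_onI) (auto simp: odd_angle_def)

lemma prod_cot_sq_odd_angle:
  "(\<Prod>j\<in>{1..n}. [:1, cot (odd_angle n j) ^ 2:]) = even_binomial_poly n"
proof (rule prod_linear_factors_eqI[symmetric])
  have "odd_angle n ` {1..n} \<subseteq> {0<..<pi/2}"
    using odd_angle_bounds by blast
  then show "inj_on (\<lambda>j. cot (odd_angle n j) ^ 2) {1..n}"
    using comp_inj_on[OF inj_on_odd_angle inj_on_subset[OF cot_sq_inj_on]] by (simp add: o_def)
  show "cot (odd_angle n j) ^ 2 \<noteq> 0" if "j \<in> {1..n}" for j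
    using cot_gt_zero odd_angle_bounds[OF that] by fastforce
  show "degree (even_binomial_poly n) \<le> card {1..n}"
    using degree_even_binomial_poly by simp
  show "poly (even_binomial_poly n) 0 = 1"
    by (simp add: poly_even_binomial_poly)
  show "poly (even_binomial_poly n) (- inverse (cot (odd_angle n j) ^ 2)) = 0" if "j \<in> {1..n}" for j
  proof -
    have "cos (odd_angle n j) > 0"
      using odd_angle_bounds[OF that] by (intro cos_gt_zero) auto
    then have "poly (even_binomial_poly n) (- (tan (odd_angle n j) ^ 2)) = 0"
      using cos_mult_even_binomial_poly[of "odd_angle n j" n] cos_mult_odd_angle[OF that] by simp
    moreover have "inverse (cot (odd_angle n j) ^ 2) = tan (odd_angle n j) ^ 2"
      by (simp add: tan_altdef power_inverse)
    ultimately show ?thesis by simp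
  qed
qed simp

lemma newton_identities_prod_linear_factors:
  fixes a :: "'b \<Rightarrow> 'a::comm_ring_1"
  assumes "finite S"
  defines "e k \<equiv> coeff (\<Prod>j\<in>S. [:1, a j:]) k"
  shows "(\<Sum>j\<in>S. a j) = e 1 \<and> (\<Sum>j\<in>S. a j ^ 2) = e 1 ^ 2 - 2 * e 2
     \<and> (\<Sum>j\<in>S. a j ^ 3) = e 1 ^ 3 - 3 * e 1 * e 2 + 3 * e 3"
proof -
  have coeff_mult_linear: "coeff ([:1, b:] * p) (Suc k) = coeff p (Suc k) + b * coeff p k"
    "coeff ([:1, b:] * p) 0 = coeff p 0" for b :: 'a and p k
    by (simp_all add: mult_pCons_left)
  have "e 0 = 1 \<and> (\<Sum>j\<in>S. a j) = e 1 \<and> (\<Sum>j\<in>S. a j ^ 2) = e 1 ^ 2 - 2 * e 2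
     \<and> (\<Sum>j\<in>S. a j ^ 3) = e 1 ^ 3 - 3 * e 1 * e 2 + 3 * e 3"
    unfolding e_def using assms(1)
  proof (induction S rule: finite_induct)
    case (insert x F)
    then show ?case
      by (simp add: coeff_mult_linear numeral_2_eq_2 numeral_3_eq_3 power2_eq_square power3_eq_cube)
        (simp add: algebra_simps)
  qed simp
  then show ?thesis by blast
qed

lemma even_binomial_power_sum_identity:
  fixes n :: nat
  defines "e k \<equiv> real (2*n choose (2*k))"
  shows "real n + 3 * e 1 + 3 * (e 1 ^ 2 - 2 * e 2) + (e 1 ^ 3 - 3 * e 1 * e 2 + 3 * e 3)
    = 8 * (real n)^2 * (8 * (real n)^4 + 5 * (real n)^2 + 2) / 15"
proof -
  have e: "e 1 = real n * (2*real n - 1)"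
    "e 2 = 2*real n*(2*real n-1)*(2*real n-2)*(2*real n-3)/24"
    "e 3 = 2*real n*(2*real n-1)*(2*real n-2)*(2*real n-3)*(2*real n-4)*(2*real n-5)/720"
    by (simp_all add: e_def binomial_gbinomial gbinomial_altdef_of_nat numeral_eq_Suc field_simps)
  show ?thesis
    unfolding e
    by (simp add: field_simps power2_eq_square power3_eq_cube)
      (simp add: algebra_simps eval_nat_numeral)
qed

theorem mainTheorem16:
  fixes n :: nat
  assumes "n \<ge> 1"
  shows "(\<Sum>j=1..n. 1 / (sin (pi * (2 * real j - 1) / (4 * real n))) ^ 6)
           = 8 * (real n)^2 * (8 * (real n)^4 + 5 * (real n)^2 + 2) / 15"
proof -
  define c where "c j = cot (odd_angle n j) ^ 2" for j
  have csc_pow6: "1 / sin (odd_angle n j) ^ 6 = (1 + c j) ^ 3" if "j \<in> {1..n}" for j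
  proof -
    have "sin (odd_angle n j) \<noteq> 0"
      using odd_angle_bounds[OF that] sin_gt_zero by fastforce
    then show ?thesis
      by (simp add: c_def one_plus_cot_sq power_divide flip: power_mult)
  qed
  have "(\<Sum>j=1..n. 1 / (sin (pi * (2 * real j - 1) / (4 * real n))) ^ 6)
      = (\<Sum>j=1..n. (1 + c j) ^ 3)"
    using csc_pow6 by (simp add: odd_angle_def)
  also have "\<dots> = real n + 3 * (\<Sum>j=1..n. c j) + 3 * (\<Sum>j=1..n. c j ^ 2) + (\<Sum>j=1..n. c j ^ 3)"
    by (simp add: power3_eq_cube power2_eq_square algebra_simps sum.distrib sum_distrib_left)
  also have "\<dots> = 8 * (real n)^2 * (8 * (real n)^4 + 5 * (real n)^2 + 2) / 15"
  proof -
    have "coeff (\<Prod>j\<in>{1..n}. [:1, c j:]) k = real (2*n choose (2*k))" for k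
      unfolding c_def prod_cot_sq_odd_angle by (rule coeff_even_binomial_poly)
    then show ?thesis
      using newton_identities_prod_linear_factors[of "{1..n}" c] even_binomial_power_sum_identity[of n]
      by simp
  qed
  finally show ?thesis .
qed

end
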